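(* Assume the composite setting below with conditions (G1), (G2) and (D). Apply Algorithm TR to $f(u)=J(S(u),u)$ with the model function $\phi$ defined below, and suppose there is $C_H>0$ with $\|H_k\|\le C_H$ for all $k$. If the algorithm does not terminate after finitely many iterations, then every accumulation point $\bar u$ of the iterates is C-stationary, i.e. $0\in\partial f(\bar u)$.
   Context: Composite setting: $J:\mathbb{R}^m\times\mathbb{R}^n\to\mathbb{R}$ continuously differentiable; $S:\mathbb{R}^n\to\mathbb{R}^m$ locally Lipschitz continuous and directionally differentiable (directional derivative $S'(u;h)$); $f(u):=J(S(u),u)$. $\partial_B S(u)$ is the Bouligand subdifferential: all limits $\lim_j S'(u_j)$ with $u_j\to u$ and $S$ differentiable at $u_j$. $\partial f(u)$ is the Clarke subdifferential of $f$. $B_r(x)$ is the closed Euclidean ball; $\|\cdot\|$ is the Euclidean/spectral norm; $a/0:=+\infty$ in minima. For each $u\in\mathbb{R}^n$, $\Delta>0$ let $\mathcal G(u,\Delta)\subset\mathbb{R}^{m\times n}$ be a nonempty bounded set, and define the model $\phi(u,\Delta;d):=\sup_{G\in\mathcal G(u,\Delta)}\langle G^\top\nabla_yJ(S(u),u)+\nabla_uJ(S(u),u),d\rangle$ and $\psi(u,\Delta):=-\min_{\|h\|\le1}\phi(u,\Delta;h)$. Conditions: (G1) $\bigcup_{\xi\in B_\Delta(u)}\partial_BS(\xi)\subseteq\mathcal G(u,\Delta)$ for all $u$, $\Delta>0$; (G2) if $(u_k,\Delta_k)\to(u,0)$ with $0\notin\partial f(u)$, then $\sup_{G\in\mathcal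 G(u_k,\Delta_k)}\inf_{W\in\partial_BS(u)}\|G-W\|\to0$; (D) for all $u,h\in\mathbb{R}^n$ there is $G\in\partial_BS(u)$ with $S'(u;h)=Gh$. Algorithm TR: choose $\Delta_{\min}>0$, $0<\eta_1<\eta_2<1$, $0<\beta_1<1<\beta_2$, $0<\mu\le1$, $u_0$, $\Delta_0>\Delta_{\min}$. For $k=0,1,\dots$: choose $g_k\in\partial f(u_k)$ and symmetric $H_k$. If $g_k=0$ stop. If $\Delta_k\ge\Delta_{\min}$: choose $d_k$ with $\|d_k\|\le\Delta_k$ and $f(u_k)-q_k(d_k)\ge\frac{\mu}{2}\|g_k\|\min\{\Delta_k,\|g_k\|/\|H_k\|\}$, $q_k(d)=f(u_k)+\langle g_k,d\rangle+\frac12d^\top H_kd$, and $\rho_k=\frac{f(u_k)-f(u_k+d_k)}{f(u_k)-q_k(d_k)}$. If $\Delta_k<\Delta_{\min}$: with $\psi_k=\psi(u_k,\Delta_k)$ choose $d_k$ with $\|d_k\|\le\Delta_k$ and $f(u_k)-\tilde q_k(d_k)\ge\frac{\mu}{2}\psi_k\min\{\Delta_k,\psi_k/\|H_k\|\}$, $\tilde q_k(d)=f(u_k)+\phi(u_k,\Delta_k;d)+\frac12d^\top H_kd$, and $\rho_k=\frac{f(u_k)-f(u_k+d_k)}{f(u_k)-\tilde q_k(d_k)}$ if $\psi_k>\|g_k\|\Delta_k$, $\rho_k=0$ otherwise. Update: $u_{k+1}=u_k$ if $\rho_k\le\eta_1$, else $u_{k+1}=u_k+d_k$; $\Delta_{k+1}=\beta_1\Delta_k$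 if $\rho_k\le\eta_1$, $\max\{\Delta_{\min},\Delta_k\}$ if $\eta_1<\rho_k\le\eta_2$, $\max\{\Delta_{\min},\beta_2\Delta_k\}$ if $\rho_k>\eta_2$. *)

theory Defs
  imports "HOL-Analysis.Analysis"
begin

definition mnorm :: "real^'n^'m \<Rightarrow> real" where
  "mnorm A = onorm (\<lambda>x. A *v x)"

definition bouligand :: "(real^'n \<Rightarrow> real^'m) \<Rightarrow> real^'n \<Rightarrow> (real^'n^'m) set" where
  "bouligand S u = {W. \<exists>x :: nat \<Rightarrow> real^'n. \<exists>Wj :: nat \<Rightarrow> real^'n^'m.
      x \<longlonglongrightarrow> u \<and> (\<forall>j. (S has_derivative (\<lambda>h. Wj j *v h)) (at (x j))) \<and> Wj \<longlonglongrightarrow> W}"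

definition clarke_dd :: "(real^'n \<Rightarrow> real) \<Rightarrow> real^'n \<Rightarrow> real^'n \<Rightarrow> ereal" where
  "clarke_dd f u h = Limsup (at (u, 0) within (UNIV \<times> {0<..}))
      (\<lambda>(y, t). ereal ((f (y + t *\<^sub>R h) - f y) / t))"

definition clarke_subdiff :: "(real^'n \<Rightarrow> real) \<Rightarrow> real^'n \<Rightarrow> (real^'n) set" where
  "clarke_subdiff f u = {g. \<forall>h. ereal (g \<bullet> h) \<le> clarke_dd f u h}"

text \<open>Convention a/0 = +infinity inside min{D, a/b}.\<close>
definition min_div :: "real \<Rightarrow> real \<Rightarrow> real \<Rightarrow> real" where
  "min_div D a b = (if b = 0 then D else min D (a / b))"

text \<open>Model function phi(u,Delta;d) and psi(u,Delta).  Jy, Ju are the partial gradients of J.\<close>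
definition model_phi ::
  "(real^'n \<Rightarrow> real \<Rightarrow> (real^'n^'m) set) \<Rightarrow> (real^'n \<Rightarrow> real^'m)
   \<Rightarrow> ((real^'m) \<times> (real^'n) \<Rightarrow> real^'m) \<Rightarrow> ((real^'m) \<times> (real^'n) \<Rightarrow> real^'n)
   \<Rightarrow> real^'n \<Rightarrow> real \<Rightarrow> real^'n \<Rightarrow> real" where
  "model_phi Gs S Jy Ju u D d =
     (SUP G\<in>Gs u D. (transpose G *v Jy (S u, u) + Ju (S u, u)) \<bullet> d)"

definition model_psi ::
  "(real^'n \<Rightarrow> real \<Rightarrow> (real^'n^'m) set) \<Rightarrow> (real^'n \<Rightarrow> real^'m)
   \<Rightarrow> ((real^'m) \<times> (real^'n) \<Rightarrow> real^'m) \<Rightarrow> ((real^'m) \<times> (real^'n) \<Rightarrow> real^'n)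
   \<Rightarrow> real^'n \<Rightarrow> real \<Rightarrow> real" where
  "model_psi Gs S Jy Ju u D = - (INF h\<in>cball 0 1. model_phi Gs S Jy Ju u D h)"

end

theory Submission
  imports Defs
begin

text \<open>
  Suppose an accumulation point \<open>ubar\<close> of the iterates were not C-stationary. Then some unit
  direction \<open>h\<close> has slope at most \<open>-c < 0\<close> for every Bouligand Jacobian at \<open>ubar\<close>, and by (G2)
  and continuity of \<open>\<nabla>J\<close> the model decrease \<open>\<psi>(x, \<Delta>)\<close> stays above \<open>c/2\<close> for all \<open>x\<close> near
  \<open>ubar\<close> and all small \<open>\<Delta>\<close>. On the other hand, by (G1), (D) and a one-sided mean value argument,
  \<open>\<phi>(x, \<Delta>; \<cdot>)\<close> overestimates the actual change of \<open>f\<close> up to an arbitrarily small multiple of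
  the step length. Hence every step near \<open>ubar\<close> with a small radius is successful, so along a
  subsequence approaching \<open>ubar\<close> we find successful steps with radii bounded below. Each of them
  decreases \<open>f\<close> by an amount that is bounded below in terms of \<open>\<parallel>g\<^sub>k\<parallel>\<close>; since \<open>f(u\<^sub>k)\<close>
  converges, these subgradients tend to \<open>0\<close>, and the closed graph of the Clarke subdifferential
  yields \<open>0 \<in> \<partial>f(ubar)\<close>.
\<close>

subsection \<open>The Clarke directional derivative\<close>

lemma Limsup_ge_sequence:
  fixes g :: "'a \<Rightarrow> ereal"
  assumes X: "filterlim X F sequentially" and a: "\<And>j. ereal (a j) \<le> g (X j)" and ac: "a \<longlonglongrightarrow> c"
  shows "ereal c \<le> Limsup F g"
proof (rule Limsup_greatest)
  fix P assume "eventually P F"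
  then have "eventually (\<lambda>j. P (X j)) sequentially" using X by (simp add: filterlim_iff)
  then have "eventually (\<lambda>j. ereal (a j) \<le> (SUP x\<in>Collect P. g x)) sequentially"
    by eventually_elim (metis a SUP_upper mem_Collect_eq order_trans)
  moreover have "(\<lambda>j. ereal (a j)) \<longlonglongrightarrow> ereal c" using ac by simp
  ultimately show "ereal c \<le> (SUP x\<in>Collect P. g x)"
    by (intro tendsto_le[OF trivial_limit_sequentially tendsto_const]) auto
qed

lemma less_Limsup_imp_frequently:
  fixes f :: "'a \<Rightarrow> 'b::complete_linorder"
  assumes "y < Limsup F f" shows "\<exists>\<^sub>F x in F. y < f x"
proof (rule ccontr)
  assume "\<not> (\<exists>\<^sub>F x in F. y < f x)"
  then have "eventually (\<lambda>x. f x \<le> y) F" by (simp add: not_frequently not_less)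
  then have "Limsup F f \<le> y" by (rule Limsup_bounded)
  with assms show False by simp
qed

definition clarke_quotient :: "(real^'n \<Rightarrow> real) \<Rightarrow> real^'n \<Rightarrow> (real^'n) \<times> real \<Rightarrow> real" where
  "clarke_quotient f h p = (f (fst p + snd p *\<^sub>R h) - f (fst p)) / snd p"

lemma clarke_dd_eq_Limsup_quotient:
  "clarke_dd f u h = Limsup (at (u, 0) within (UNIV \<times> {0<..})) (\<lambda>p. ereal (clarke_quotient f h p))"
  unfolding clarke_dd_def clarke_quotient_def case_prod_unfold by (rule refl)

lemma clarke_dd_ge_sequence:
  assumes y: "y \<longlonglongrightarrow> u" and t: "t \<longlonglongrightarrow> 0" and t_pos: "\<And>j. t j > 0"
    and a: "\<And>j. a j \<le> (f (y j + t j *\<^sub>R h) - f (y j)) / t j" and ac: "a \<longlonglongrightarrow> c"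
  shows "ereal c \<le> clarke_dd f u h"
  unfolding clarke_dd_eq_Limsup_quotient
proof (rule Limsup_ge_sequence[where X="\<lambda>j. (y j, t j)" and a=a])
  show "filterlim (\<lambda>j. (y j, t j)) (at (u, 0) within UNIV \<times> {0<..}) sequentially"
    unfolding filterlim_at using y t t_pos
    by (auto intro!: tendsto_Pair always_eventually simp: less_imp_neq[symmetric])
  show "ereal (a j) \<le> ereal (clarke_quotient f h (y j, t j))" for j
    using a[of j] by (simp add: clarke_quotient_def)
qed fact

lemma directional_derivative_le_clarke_dd:
  assumes "((\<lambda>t. (f (x + t *\<^sub>R h) - f x) / t) \<longlongrightarrow> c) (at_right 0)"
  shows "ereal c \<le> clarke_dd f x h"
proof -
  define t where "t j = inverse (real (Suc j))" for j
  have t_pos: "t j > 0" for j by (simp add: t_def)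
  have t0: "t \<longlonglongrightarrow> 0" unfolding t_def by (rule LIMSEQ_inverse_real_of_nat)
  have "filterlim t (at_right 0) sequentially"
    using t0 t_pos by (auto simp: filterlim_at less_imp_neq[symmetric] intro!: always_eventually)
  with assms have "(\<lambda>j. (f (x + t j *\<^sub>R h) - f x) / t j) \<longlonglongrightarrow> c"
    by (rule filterlim_compose)
  then show ?thesis
    by (intro clarke_dd_ge_sequence[where y="\<lambda>_. x" and t=t]) (auto simp: t_pos t0)
qed

lemma clarke_dd_upper_semicontinuous:
  assumes x: "x \<longlonglongrightarrow> x0" and c: "\<And>j. ereal (c j) \<le> clarke_dd f (x j) h" and cc: "c \<longlonglongrightarrow> c0"
  shows "ereal c0 \<le> clarke_dd f x0 h"
proof -
  define e where "e j = inverse (real (Suc j))" for j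
  have e_pos: "e j > 0" for j by (simp add: e_def)
  have e0: "e \<longlonglongrightarrow> 0" unfolding e_def by (rule LIMSEQ_inverse_real_of_nat)
  have "\<exists>p. p \<in> UNIV \<times> {0<..} \<and> dist p (x j, 0) < e j \<and> c j - e j < clarke_quotient f h p" for j
  proof -
    have "ereal (c j - e j) < ereal (c j)" using e_pos[of j] by simp
    then have "ereal (c j - e j) < clarke_dd f (x j) h" using c[of j] by (rule order_less_le_trans)
    then have "\<exists>\<^sub>F p in at (x j, 0) within UNIV \<times> {0<..}. ereal (c j - e j) < ereal (clarke_quotient f h p)"
      unfolding clarke_dd_eq_Limsup_quotient by (rule less_Limsup_imp_frequently)
    then show ?thesis unfolding frequently_at using e_pos[of j] by force
  qed
  then obtain p where p: "\<And>j. p j \<in> UNIV \<times> {0<..} \<and> dist (p j) (x j, 0) < e j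
      \<and> c j - e j < clarke_quotient f h (p j)"
    by metis
  have "(\<lambda>j. fst (p j) - x j) \<longlonglongrightarrow> 0"
  proof (rule Lim_null_comparison[OF always_eventually e0], intro allI)
    fix j show "norm (fst (p j) - x j) \<le> e j"
      using p[of j] dist_fst_le[of "p j" "(x j, 0)"] by (simp add: dist_norm)
  qed
  then have y: "(\<lambda>j. fst (p j)) \<longlonglongrightarrow> x0"
    using x by (rule Lim_transform[rotated])
  have t: "(\<lambda>j. snd (p j)) \<longlonglongrightarrow> 0"
  proof (rule Lim_null_comparison[OF always_eventually e0], intro allI)
    fix j show "norm (snd (p j)) \<le> e j"
      using p[of j] dist_snd_le[of "p j" "(x j, 0)"] by (simp add: dist_norm)
  qed
  show ?thesis
  proof (rule clarke_dd_ge_sequence[OF y t])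
    show "snd (p j) > 0" for j using p[of j] by auto
    show "c j - e j \<le> (f (fst (p j) + snd (p j) *\<^sub>R h) - f (fst (p j))) / snd (p j)" for j
      using p[of j] by (simp add: clarke_quotient_def)
    show "(\<lambda>j. c j - e j) \<longlonglongrightarrow> c0" using tendsto_diff[OF cc e0] by simp
  qed
qed

lemma clarke_subdiff_closed_graph:
  assumes "x \<longlonglongrightarrow> x0" "\<And>j. g j \<in> clarke_subdiff f (x j)" "g \<longlonglongrightarrow> g0"
  shows "g0 \<in> clarke_subdiff f x0"
  unfolding clarke_subdiff_def
proof (intro CollectI allI)
  fix h
  show "ereal (g0 \<bullet> h) \<le> clarke_dd f x0 h"
  proof (rule clarke_dd_upper_semicontinuous[OF assms(1)])
    show "ereal (g j \<bullet> h) \<le> clarke_dd f (x j) h" for j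
      using assms(2)[of j] by (simp add: clarke_subdiff_def)
    show "(\<lambda>j. g j \<bullet> h) \<longlonglongrightarrow> g0 \<bullet> h" using assms(3) by (intro tendsto_intros)
  qed
qed

lemma clarke_subdiff_norm_le_lipschitz:
  assumes e: "e > 0" and L: "L-lipschitz_on (ball x e) f" and g: "g \<in> clarke_subdiff f x"
  shows "norm g \<le> L"
proof (cases "g = 0")
  case True then show ?thesis using lipschitz_on_nonneg[OF L] by simp
next
  case False
  define \<delta> where "\<delta> = e / (2 * (1 + norm g))"
  have g1: "1 + norm g > 0" by (simp add: add_pos_nonneg)
  then have \<delta>_pos: "\<delta> > 0" using e by (simp add: \<delta>_def)
  have "\<delta> * (1 + norm g) = e / 2" using g1 unfolding \<delta>_def by (simp add: field_simps)
  then have \<delta>_e: "\<delta> + \<delta> * norm g = e / 2" by (simp add: algebra_simps)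
  have "eventually (\<lambda>p. ereal (clarke_quotient f g p) \<le> ereal (L * norm g)) (at (x, 0) within UNIV \<times> {0<..})"
    unfolding eventually_at
  proof (intro exI[of _ \<delta>] conjI \<delta>_pos ballI impI)
    fix p :: "(real^'a) \<times> real" assume p: "p \<in> UNIV \<times> {0<..}" "p \<noteq> (x, 0) \<and> dist p (x, 0) < \<delta>"
    obtain y t where p_eq: "p = (y, t)" by (cases p)
    have t: "t > 0" using p p_eq by auto
    have dy: "dist y x < \<delta>" using p(2) dist_fst_le[of p "(x,0)"] p_eq by simp
    have dt: "t < \<delta>" using p(2) dist_snd_le[of p "(x,0)"] p_eq t by (simp add: dist_real_def)
    have "\<delta> \<le> e / 2" using \<delta>_e mult_nonneg_nonneg[OF less_imp_le[OF \<delta>_pos] norm_ge_zero[of g]] by linarith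
    then have y: "y \<in> ball x e" using dy e by (simp add: dist_commute)
    have "dist (y + t *\<^sub>R g) x \<le> dist y x + t * norm g"
      using dist_triangle[of "y + t *\<^sub>R g" x y] t by (simp add: dist_norm)
    also have "\<dots> \<le> \<delta> + \<delta> * norm g" using dy dt by (intro add_mono mult_right_mono) auto
    finally have y': "y + t *\<^sub>R g \<in> ball x e" using \<delta>_e e by (simp add: dist_commute)
    have "f (y + t *\<^sub>R g) - f y \<le> t * (L * norm g)"
      using lipschitz_onD[OF L y' y] t by (simp add: dist_norm algebra_simps)
    then show "ereal (clarke_quotient f g p) \<le> ereal (L * norm g)"
      using t by (simp add: clarke_quotient_def p_eq divide_le_eq mult.commute)
  qed
  then have "clarke_dd f x g \<le> ereal (L * norm g)"
    unfolding clarke_dd_eq_Limsup_quotient by (rule Limsup_bounded)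
  moreover have "ereal (g \<bullet> g) \<le> clarke_dd f x g" using g by (simp add: clarke_subdiff_def)
  ultimately have "ereal (g \<bullet> g) \<le> ereal (L * norm g)" by (rule order_trans[rotated])
  then have "norm g * norm g \<le> L * norm g"
    by (simp add: power2_norm_eq_inner[symmetric] power2_eq_square)
  then show ?thesis using False by simp
qed

subsection \<open>One-sided directional derivatives\<close>

lemma has_derivative_at_right_iff_quotient:
  fixes \<phi> :: "real \<Rightarrow> 'a::real_normed_vector"
  shows "(\<phi> has_derivative (\<lambda>s. s *\<^sub>R v)) (at 0 within {0<..}) \<longleftrightarrow>
         ((\<lambda>t. (\<phi> t - \<phi> 0) /\<^sub>R t) \<longlongrightarrow> v) (at_right 0)"
proof -
  have "eventually (\<lambda>t. ((\<phi> t - \<phi> 0) - (t - 0) *\<^sub>R v) /\<^sub>R norm (t - 0)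
        = (\<phi> t - \<phi> 0) /\<^sub>R t - v) (at_right (0::real))"
    using eventually_at_right_less[of "0::real"]
    by eventually_elim (simp add: scaleR_diff_right)
  then have "((\<lambda>t. ((\<phi> t - \<phi> 0) - (t - 0) *\<^sub>R v) /\<^sub>R norm (t - 0)) \<longlongrightarrow> 0) (at_right 0)
      \<longleftrightarrow> ((\<lambda>t. (\<phi> t - \<phi> 0) /\<^sub>R t - v) \<longlongrightarrow> 0) (at_right 0)"
    by (rule tendsto_cong)
  then show ?thesis
    by (simp add: has_derivative_at_within LIM_zero_iff bounded_linear_scaleR_left)
qed

lemma has_derivative_imp_directional_quotient:
  fixes S :: "'a::real_normed_vector \<Rightarrow> 'b::real_normed_vector"
  assumes "(S has_derivative S') (at x)"
  shows "((\<lambda>t. (S (x + t *\<^sub>R h) - S x) /\<^sub>R t) \<longlongrightarrow> S' h) (at_right 0)"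
proof -
  have "((\<lambda>t. x + t *\<^sub>R h) has_derivative (\<lambda>s. s *\<^sub>R h)) (at 0 within {0<..})"
    by (auto intro!: derivative_eq_intros)
  then have "((\<lambda>t. S (x + t *\<^sub>R h)) has_derivative (\<lambda>s. S' (s *\<^sub>R h))) (at 0 within {0<..})"
    using has_derivative_compose assms by fastforce
  then have "((\<lambda>t. S (x + t *\<^sub>R h)) has_derivative (\<lambda>s. s *\<^sub>R S' h)) (at 0 within {0<..})"
    using linear_scale[OF has_derivative_linear[OF assms]] by simp
  then show ?thesis by (subst (asm) has_derivative_at_right_iff_quotient) simp
qed

lemma directional_quotient_chain:
  fixes J :: "'a::real_inner \<times> 'b::real_inner \<Rightarrow> real" and S :: "'b \<Rightarrow> 'a"
  assumes J: "(J has_derivative (\<lambda>(dy, du). Jy \<bullet> dy + Ju \<bullet> du)) (at (S x, x))"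
    and S: "((\<lambda>t. (S (x + t *\<^sub>R d) - S x) /\<^sub>R t) \<longlongrightarrow> v) (at_right 0)"
  shows "((\<lambda>t. (J (S (x + t *\<^sub>R d), x + t *\<^sub>R d) - J (S x, x)) / t) \<longlongrightarrow> Jy \<bullet> v + Ju \<bullet> d) (at_right 0)"
proof -
  define \<gamma> where "\<gamma> t = (S (x + t *\<^sub>R d), x + t *\<^sub>R d)" for t :: real
  have S': "((\<lambda>t. S (x + t *\<^sub>R d)) has_derivative (\<lambda>s. s *\<^sub>R v)) (at 0 within {0<..})"
    using S by (subst has_derivative_at_right_iff_quotient) simp
  have x': "((\<lambda>t. x + t *\<^sub>R d) has_derivative (\<lambda>s. s *\<^sub>R d)) (at 0 within {0<..})"
    by (auto intro!: derivative_eq_intros)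
  have \<gamma>: "(\<gamma> has_derivative (\<lambda>s. s *\<^sub>R (v, d))) (at 0 within {0<..})"
    unfolding \<gamma>_def using has_derivative_Pair[OF S' x'] by simp
  have J': "(J has_derivative (\<lambda>(dy, du). Jy \<bullet> dy + Ju \<bullet> du)) (at (\<gamma> 0) within \<gamma> ` {0<..})"
    using has_derivative_at_withinI[OF J] by (simp add: \<gamma>_def)
  have "(J \<circ> \<gamma> has_derivative (\<lambda>s. s *\<^sub>R (Jy \<bullet> v + Ju \<bullet> d))) (at 0 within {0<..})"
    using diff_chain_within[OF \<gamma> J'] by (simp add: o_def inner_scaleR_right algebra_simps)
  then have "((\<lambda>t. ((J \<circ> \<gamma>) t - (J \<circ> \<gamma>) 0) /\<^sub>R t) \<longlongrightarrow> Jy \<bullet> v + Ju \<bullet> d) (at_right 0)"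
    by (subst (asm) has_derivative_at_right_iff_quotient)
  then show ?thesis by (simp add: \<gamma>_def divide_inverse mult.commute)
qed

lemma lipschitz_directional_derivative_bound:
  fixes S :: "'a::real_normed_vector \<Rightarrow> 'b::real_normed_vector"
  assumes q: "((\<lambda>t. (S (x + t *\<^sub>R h) - S x) /\<^sub>R t) \<longlongrightarrow> v) (at_right 0)"
    and lip: "L-lipschitz_on U S" and e: "e > 0" and U: "ball x e \<subseteq> U"
  shows "norm v \<le> L * norm h"
proof -
  have pos: "norm h + 1 > 0" by (simp add: add_nonneg_pos)
  have "eventually (\<lambda>t. norm ((S (x + t *\<^sub>R h) - S x) /\<^sub>R t) \<le> L * norm h) (at_right 0)"
    unfolding eventually_at_right_field
  proof (intro exI[of _ "e / (norm h + 1)"] conjI allI impI)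
    show "0 < e / (norm h + 1)" using e pos by simp
    fix t :: real assume t: "0 < t" "t < e / (norm h + 1)"
    have "t * norm h \<le> t * (norm h + 1)" using t by simp
    also have "\<dots> < e" using t pos by (simp add: less_divide_eq)
    finally have "x + t *\<^sub>R h \<in> U" using t U by (auto simp: dist_norm)
    moreover have "x \<in> U" using U e by auto
    ultimately have "norm (S (x + t *\<^sub>R h) - S x) \<le> L * norm (t *\<^sub>R h)"
      using lipschitz_on_normD[OF lip] by fastforce
    then have "norm (S (x + t *\<^sub>R h) - S x) \<le> t * (L * norm h)"
      using t by (simp add: algebra_simps)
    then have "norm (S (x + t *\<^sub>R h) - S x) / t \<le> L * norm h"
      using t by (simp add: divide_le_eq mult.commute)
    then show "norm ((S (x + t *\<^sub>R h) - S x) /\<^sub>R t) \<le> L * norm h"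
      using t by (simp add: divide_inverse_commute)
  qed
  then show ?thesis
    by (rule tendsto_upperbound[OF tendsto_norm[OF q]]) simp
qed

text \<open>A mean value inequality needing only right-hand difference quotients, which is all that
  directional differentiability of \<open>S\<close> provides along a segment.\<close>
lemma increment_le_of_right_quotients:
  fixes h :: "real \<Rightarrow> real"
  assumes cont: "continuous_on {0..1} h"
    and der: "\<And>t. 0 \<le> t \<Longrightarrow> t < 1 \<Longrightarrow>
      \<exists>D. ((\<lambda>s. (h (t + s) - h t) / s) \<longlongrightarrow> D) (at_right 0) \<and> D \<le> M"
  shows "h 1 - h 0 \<le> M"
proof (rule field_le_epsilon)
  fix e :: real assume e: "0 < e"
  define A where "A = {t \<in> {0..1}. h t - h 0 \<le> (M + e) * t}"
  have A_closed: "closed A" unfolding A_def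
    by (rule continuous_on_closed_Collect_le) (auto intro!: continuous_intros cont)
  have A_bdd: "bdd_above A" by (auto simp: A_def bdd_above_def)
  define s where "s = Sup A"
  have sA: "s \<in> A"
    unfolding s_def using closed_contains_Sup[OF _ A_bdd A_closed] by (force simp: A_def)
  have "s = 1"
  proof (rule ccontr)
    assume "s \<noteq> 1"
    with sA have s: "0 \<le> s" "s < 1" by (auto simp: A_def)
    obtain D where D: "((\<lambda>\<sigma>. (h (s + \<sigma>) - h s) / \<sigma>) \<longlongrightarrow> D) (at_right 0)" "D \<le> M"
      using der[OF s] by blast
    have "eventually (\<lambda>\<sigma>. (h (s + \<sigma>) - h s) / \<sigma> < M + e) (at_right 0)"
      using order_tendstoD(2)[OF D(1)] D(2) e by simp
    then obtain b where b: "b > 0" "\<And>\<sigma>. \<sigma> > 0 \<Longrightarrow> \<sigma> < b \<Longrightarrow> (h (s + \<sigma>) - h s) / \<sigma> < M + e"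
      unfolding eventually_at_right_field by auto
    define \<sigma> where "\<sigma> = min (b/2) ((1 - s)/2)"
    have "\<sigma> \<le> (1 - s)/2" unfolding \<sigma>_def by (rule min.cobounded2)
    then have \<sigma>: "\<sigma> > 0" "\<sigma> < b" "s + \<sigma> \<le> 1" using b s by (auto simp: \<sigma>_def)
    have "h (s + \<sigma>) - h s < (M + e) * \<sigma>" using b(2)[OF \<sigma>(1,2)] \<sigma>(1) by (simp add: divide_less_eq)
    moreover have "h s - h 0 \<le> (M + e) * s" using sA by (simp add: A_def)
    ultimately have "s + \<sigma> \<in> A" using \<sigma> s by (simp add: A_def algebra_simps)
    then have "s + \<sigma> \<le> s" unfolding s_def by (rule cSup_upper[OF _ A_bdd])
    with \<sigma> show False by simp
  qed
  then show "h 1 - h 0 \<le> M + e" using sA by (simp add: A_def)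
qed

subsection \<open>Operator norms\<close>

lemma mnorm_nonneg: "mnorm A \<ge> 0"
  unfolding mnorm_def by (rule onorm_pos_le) simp

lemma norm_matrix_vector_mult_le: "norm (A *v x) \<le> mnorm A * norm x"
  unfolding mnorm_def by (rule onorm) simp

lemma abs_quadratic_form_le: "\<bar>x \<bullet> (A *v x)\<bar> \<le> mnorm A * norm x * norm x"
proof -
  have "\<bar>x \<bullet> (A *v x)\<bar> \<le> norm x * norm (A *v x)" by (rule Cauchy_Schwarz_ineq2)
  also have "\<dots> \<le> norm x * (mnorm A * norm x)" by (intro mult_left_mono norm_matrix_vector_mult_le) simp
  finally show ?thesis by (simp add: mult_ac)
qed

lemma mnorm_diff_le: "mnorm (A - B) \<le> mnorm A + mnorm B"
  unfolding mnorm_def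
proof (rule onorm_le)
  fix v
  have "norm ((A - B) *v v) \<le> norm (A *v v) + norm (B *v v)"
    by (simp add: matrix_vector_mult_diff_rdistrib norm_triangle_ineq4)
  also have "\<dots> \<le> mnorm A * norm v + mnorm B * norm v"
    by (intro add_mono norm_matrix_vector_mult_le)
  finally show "norm ((A - B) *v v) \<le> (onorm ((*v) A) + onorm ((*v) B)) * norm v"
    by (simp add: mnorm_def algebra_simps)
qed

lemma mnorm_le_norm: "mnorm (A :: real^'n^'m) \<le> real CARD('m) * real CARD('n) * norm A"
  unfolding mnorm_def
proof (rule onorm_le_matrix_component)
  fix i j
  have "\<bar>A $ i $ j\<bar> \<le> norm (A $ i)" by (rule component_le_norm_cart)
  also have "\<dots> \<le> norm A" by (rule Finite_Cartesian_Product.norm_nth_le)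
  finally show "\<bar>A $ i $ j\<bar> \<le> norm A" .
qed

lemma onorm_inner_pair_le:
  fixes a :: "'a::euclidean_space" and b :: "'b::euclidean_space"
  shows "onorm (\<lambda>(x, y). a \<bullet> x + b \<bullet> y) \<le> norm a + norm b"
proof (rule onorm_le)
  fix p :: "'a \<times> 'b"
  obtain x y where p: "p = (x, y)" by (cases p)
  have "\<bar>a \<bullet> x + b \<bullet> y\<bar> \<le> \<bar>a \<bullet> x\<bar> + \<bar>b \<bullet> y\<bar>" by (rule abs_triangle_ineq)
  also have "\<dots> \<le> norm a * norm x + norm b * norm y" by (intro add_mono Cauchy_Schwarz_ineq2)
  also have "\<dots> \<le> (norm a + norm b) * norm p"
    using p by (simp add: distrib_right add_mono mult_left_mono norm_fst_le norm_snd_le)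
  finally show "norm (case p of (x, y) \<Rightarrow> a \<bullet> x + b \<bullet> y) \<le> (norm a + norm b) * norm p"
    by (simp add: p)
qed

lemma tendsto_matrix_vector_mult:
  fixes A :: "'a \<Rightarrow> real^'n^'m"
  assumes "(A \<longlongrightarrow> A0) F" shows "((\<lambda>x. A x *v v) \<longlongrightarrow> A0 *v v) F"
  unfolding matrix_vector_mult_def
  by (intro tendsto_vec_lambda tendsto_sum tendsto_mult tendsto_vec_nth tendsto_const assms)

subsection \<open>The composite problem\<close>

locale composite_problem =
  fixes J :: "(real^'m) \<times> (real^'n) \<Rightarrow> real"
    and Jy :: "(real^'m) \<times> (real^'n) \<Rightarrow> real^'m"
    and Ju :: "(real^'m) \<times> (real^'n) \<Rightarrow> real^'n"
    and S :: "real^'n \<Rightarrow> real^'m"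
    and dS :: "real^'n \<Rightarrow> real^'n \<Rightarrow> real^'m"
    and f :: "real^'n \<Rightarrow> real"
    and Gs :: "real^'n \<Rightarrow> real \<Rightarrow> (real^'n^'m) set"
  assumes J_deriv: "\<And>z. (J has_derivative (\<lambda>(dy, du). Jy z \<bullet> dy + Ju z \<bullet> du)) (at z)"
    and Jy_cont: "continuous_on UNIV Jy"
    and Ju_cont: "continuous_on UNIV Ju"
    and S_loclip: "\<And>x. \<exists>r>0. \<exists>L. L-lipschitz_on (cball x r) S"
    and S_dirdiff: "\<And>x h. ((\<lambda>t. (S (x + t *\<^sub>R h) - S x) /\<^sub>R t) \<longlongrightarrow> dS x h) (at_right 0)"
    and f_def: "f = (\<lambda>x. J (S x, x))"
    and Gs_ne: "\<And>x D. D > 0 \<Longrightarrow> Gs x D \<noteq> {}"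
    and Gs_bdd: "\<And>x D. D > 0 \<Longrightarrow> bounded (Gs x D)"
    and G1: "\<And>x D. D > 0 \<Longrightarrow> (\<Union>\<xi>\<in>cball x D. bouligand S \<xi>) \<subseteq> Gs x D"
    and G2: "\<And>xs Ds x. xs \<longlonglongrightarrow> x \<Longrightarrow> Ds \<longlonglongrightarrow> 0 \<Longrightarrow> (\<forall>k. Ds k > 0) \<Longrightarrow>
               0 \<notin> clarke_subdiff f x \<Longrightarrow>
               (\<lambda>k. SUP G\<in>Gs (xs k) (Ds k). INF W\<in>bouligand S x. mnorm (G - W)) \<longlonglongrightarrow> 0"
    and D_cond: "\<And>x h. \<exists>G\<in>bouligand S x. dS x h = G *v h"
begin

definition slope :: "real^'n^'m \<Rightarrow> real^'n \<Rightarrow> real^'n \<Rightarrow> real" where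
  "slope G x w = Jy (S x, x) \<bullet> (G *v w) + Ju (S x, x) \<bullet> w"

lemma slope_scaleR: "slope G x (c *\<^sub>R w) = c * slope G x w"
  by (simp add: slope_def matrix_vector_mult_scaleR algebra_simps)

lemma S_isCont: "isCont S x"
proof -
  obtain r L where r: "r > 0" "L-lipschitz_on (cball x r) S" using S_loclip[of x] by blast
  have "continuous_on (cball x r) S" using lipschitz_on_continuous_on[OF r(2)] .
  then show ?thesis using r(1) by (simp add: continuous_on_interior)
qed

lemma state_isCont: "isCont (\<lambda>x. (S x, x)) x"
  by (intro continuous_intros S_isCont)

lemma f_isCont: "isCont f x"
proof -
  have "isCont J (S x, x)" using has_derivative_continuous[OF J_deriv] by (simp add: continuous_at)
  then show ?thesis
    unfolding f_def using continuous_at_compose[OF state_isCont]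
    by (simp add: o_def)
qed

lemma Jy_comp_isCont: "isCont (\<lambda>x. Jy (S x, x)) x"
  using continuous_at_compose[OF state_isCont, where g=Jy] Jy_cont
  by (simp add: o_def continuous_on_eq_continuous_at)

lemma Ju_comp_isCont: "isCont (\<lambda>x. Ju (S x, x)) x"
  using continuous_at_compose[OF state_isCont, where g=Ju] Ju_cont
  by (simp add: o_def continuous_on_eq_continuous_at)

lemma f_locally_lipschitz: "\<exists>r>0. \<exists>L. L-lipschitz_on (cball x0 r) f"
proof -
  obtain r LS where r: "r > 0" and LS: "LS-lipschitz_on (cball x0 r) S" using S_loclip[of x0] by blast
  have LS_nonneg: "LS \<ge> 0" using lipschitz_on_nonneg[OF LS] .
  define K where "K = cball (S x0, x0) ((LS + 1) * r)"
  have Pair_dist: "norm ((S y, y) - (S z, z)) \<le> (LS + 1) * norm (y - z)"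
    if "y \<in> cball x0 r" "z \<in> cball x0 r" for y z
  proof -
    have "norm ((S y, y) - (S z, z)) \<le> norm (S y - S z) + norm (y - z)"
      using norm_Pair_le[of "S y - S z" "y - z"] by simp
    also have "norm (S y - S z) \<le> LS * norm (y - z)" using lipschitz_on_normD[OF LS that] .
    finally show ?thesis by (simp add: algebra_simps)
  qed
  have in_K: "(S y, y) \<in> K" if "y \<in> cball x0 r" for y
  proof -
    have "norm ((S x0, x0) - (S y, y)) \<le> (LS + 1) * norm (x0 - y)"
      using Pair_dist[of x0 y] that r by simp
    also have "\<dots> \<le> (LS + 1) * r"
      using that LS_nonneg by (intro mult_left_mono) (auto simp: dist_norm)
    finally show ?thesis by (simp add: K_def dist_norm)
  qed
  have "continuous_on K (\<lambda>z. norm (Jy z) + norm (Ju z))"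
    using continuous_on_subset[OF Jy_cont] continuous_on_subset[OF Ju_cont]
    by (intro continuous_intros) auto
  then have "bounded ((\<lambda>z. norm (Jy z) + norm (Ju z)) ` K)"
    unfolding K_def by (intro compact_imp_bounded compact_continuous_image) auto
  then obtain B where B: "\<And>z. z \<in> K \<Longrightarrow> norm (Jy z) + norm (Ju z) \<le> B"
    unfolding bounded_iff by (metis (no_types, lifting) image_eqI real_norm_def abs_le_D1)
  have "norm (Jy (S x0, x0)) + norm (Ju (S x0, x0)) \<le> B" using B[OF in_K[of x0]] r by simp
  then have B_nonneg: "B \<ge> 0" using norm_ge_zero[of "Jy (S x0, x0)"] norm_ge_zero[of "Ju (S x0, x0)"] by linarith
  have J_lip: "norm (J a - J b) \<le> B * norm (a - b)" if "a \<in> K" "b \<in> K" for a b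
  proof (rule differentiable_bound[OF _ _ _ that])
    show "convex K" by (simp add: K_def)
    show "(J has_derivative (\<lambda>(dy, du). Jy z \<bullet> dy + Ju z \<bullet> du)) (at z within K)" for z
      using J_deriv has_derivative_at_withinI by blast
    show "onorm (\<lambda>(dy, du). Jy z \<bullet> dy + Ju z \<bullet> du) \<le> B" if "z \<in> K" for z
      using onorm_inner_pair_le[of "Jy z" "Ju z"] B[OF that] by linarith
  qed
  have "(B * (LS + 1))-lipschitz_on (cball x0 r) f"
  proof (rule lipschitz_onI)
    fix y z assume y: "y \<in> cball x0 r" and z: "z \<in> cball x0 r"
    have "dist (f y) (f z) \<le> B * norm ((S y, y) - (S z, z))"
      using J_lip[OF in_K[OF y] in_K[OF z]] by (simp add: f_def dist_norm)
    also have "\<dots> \<le> B * ((LS + 1) * norm (y - z))"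
      using Pair_dist[OF y z] B_nonneg by (rule mult_left_mono)
    finally show "dist (f y) (f z) \<le> B * (LS + 1) * dist y z" by (simp add: dist_norm mult.assoc)
  qed (use B_nonneg LS_nonneg in simp)
  then show ?thesis using r by blast
qed

lemma clarke_subdiff_locally_bounded:
  "\<exists>\<delta>>0. \<exists>L. \<forall>x g. norm (x - x0) < \<delta> \<longrightarrow> g \<in> clarke_subdiff f x \<longrightarrow> norm g \<le> L"
proof -
  obtain r L where r: "r > 0" and L: "L-lipschitz_on (cball x0 r) f"
    using f_locally_lipschitz by blast
  have "norm g \<le> L" if "norm (x - x0) < r / 2" "g \<in> clarke_subdiff f x" for x g
  proof (rule clarke_subdiff_norm_le_lipschitz[OF _ _ that(2)])
    have "ball x (r / 2) \<subseteq> cball x0 r"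
    proof
      fix y assume "y \<in> ball x (r / 2)"
      then show "y \<in> cball x0 r"
        using that(1) dist_triangle[of x0 y x] by (simp add: dist_norm norm_minus_commute)
    qed
    then show "L-lipschitz_on (ball x (r / 2)) f" using L by (rule lipschitz_on_subset[rotated])
  qed (use r in simp)
  then show ?thesis using r by (intro exI[of _ "r / 2"]) auto
qed

lemma bouligand_bounded: "\<exists>L. \<forall>W\<in>bouligand S x0. \<forall>h. norm (W *v h) \<le> L * norm h"
proof -
  obtain r L where r: "r > 0" and L: "L-lipschitz_on (cball x0 r) S" using S_loclip[of x0] by blast
  have "norm (W *v h) \<le> L * norm h" if W: "W \<in> bouligand S x0" for W h
  proof -
    obtain xs Wj where xs: "xs \<longlonglongrightarrow> x0" and dW: "\<And>j. (S has_derivative (\<lambda>h. Wj j *v h)) (at (xs j))"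
      and Wj: "Wj \<longlonglongrightarrow> W"
      using W unfolding bouligand_def by blast
    have "r / 2 > 0" using r by simp
    then have "eventually (\<lambda>j. dist (xs j) x0 < r / 2) sequentially"
      using xs unfolding tendsto_iff by blast
    then have "eventually (\<lambda>j. norm (Wj j *v h) \<le> L * norm h) sequentially"
    proof eventually_elim
      case (elim j)
      have "ball (xs j) (r / 2) \<subseteq> cball x0 r"
      proof
        fix y assume "y \<in> ball (xs j) (r / 2)"
        then show "y \<in> cball x0 r" using elim dist_triangle[of x0 y "xs j"] by (simp add: dist_commute)
      qed
      moreover have "r / 2 > 0" using r by simp
      ultimately show ?case
        using lipschitz_directional_derivative_bound[OF has_derivative_imp_directional_quotient[OF dW] L]
        by blast
    qed
    then show ?thesis
      by (rule tendsto_upperbound[OF tendsto_norm[OF tendsto_matrix_vector_mult[OF Wj]]]) simp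
  qed
  then show ?thesis by blast
qed

lemma slope_le_clarke_dd:
  assumes W: "W \<in> bouligand S x0"
  shows "ereal (slope W x0 h) \<le> clarke_dd f x0 h"
proof -
  obtain xs Wj where xs: "xs \<longlonglongrightarrow> x0" and dW: "\<And>j. (S has_derivative (\<lambda>h. Wj j *v h)) (at (xs j))"
    and Wj: "Wj \<longlonglongrightarrow> W"
    using W unfolding bouligand_def by blast
  show ?thesis
  proof (rule clarke_dd_upper_semicontinuous[OF xs])
    fix j
    have "((\<lambda>t. (f (xs j + t *\<^sub>R h) - f (xs j)) / t) \<longlongrightarrow> slope (Wj j) (xs j) h) (at_right 0)"
      unfolding f_def slope_def
      by (rule directional_quotient_chain[OF J_deriv has_derivative_imp_directional_quotient[OF dW]])
    then show "ereal (slope (Wj j) (xs j) h) \<le> clarke_dd f (xs j) h"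
      by (rule directional_derivative_le_clarke_dd)
  next
    show "(\<lambda>j. slope (Wj j) (xs j) h) \<longlonglongrightarrow> slope W x0 h"
      unfolding slope_def
      by (intro tendsto_intros tendsto_matrix_vector_mult[OF Wj]
          isCont_tendsto_compose[OF Jy_comp_isCont xs] isCont_tendsto_compose[OF Ju_comp_isCont xs])
  qed
qed

lemma slope_difference_le:
  "slope G x h - slope W x0 h \<le> norm (Jy (S x, x)) * norm ((G - W) *v h)
     + norm (Jy (S x, x) - Jy (S x0, x0)) * norm (W *v h) + norm (Ju (S x, x) - Ju (S x0, x0)) * norm h"
proof -
  have "slope G x h - slope W x0 h = Jy (S x, x) \<bullet> ((G - W) *v h)
      + (Jy (S x, x) - Jy (S x0, x0)) \<bullet> (W *v h) + (Ju (S x, x) - Ju (S x0, x0)) \<bullet> h"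
    by (simp add: slope_def matrix_vector_mult_diff_rdistrib inner_diff_left inner_diff_right)
  then show ?thesis
    by (simp add: add_mono Cauchy_Schwarz_ineq2[THEN abs_le_D1])
qed

lemma abs_slope_le: "\<bar>slope G x w\<bar> \<le> (norm (Jy (S x, x)) * mnorm G + norm (Ju (S x, x))) * norm w"
proof -
  have "\<bar>slope G x w\<bar> \<le> norm (Jy (S x, x)) * norm (G *v w) + norm (Ju (S x, x)) * norm w"
    unfolding slope_def by (intro abs_triangle_ineq[THEN order_trans] add_mono Cauchy_Schwarz_ineq2)
  also have "\<dots> \<le> norm (Jy (S x, x)) * (mnorm G * norm w) + norm (Ju (S x, x)) * norm w"
    by (intro add_mono mult_left_mono norm_matrix_vector_mult_le) auto
  finally show ?thesis by (simp add: algebra_simps)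
qed

lemma model_phi_eq_SUP: "model_phi Gs S Jy Ju x D w = (SUP G\<in>Gs x D. slope G x w)"
  unfolding model_phi_def slope_def by (simp add: inner_add_left dot_lmul_matrix)

lemma Gs_mnorm_bounded: "D > 0 \<Longrightarrow> \<exists>M. \<forall>G\<in>Gs x D. mnorm G \<le> M"
  using Gs_bdd[of D x] mnorm_le_norm unfolding bounded_iff
  by (meson mult_left_mono of_nat_0_le_iff order_trans zero_le_mult_iff)

lemma slope_le_model_phi:
  assumes "D > 0" "G \<in> Gs x D" shows "slope G x w \<le> model_phi Gs S Jy Ju x D w"
proof -
  obtain M where M: "\<And>G. G \<in> Gs x D \<Longrightarrow> mnorm G \<le> M" using Gs_mnorm_bounded[OF assms(1)] by blast
  have "slope G' x w \<le> (norm (Jy (S x, x)) * M + norm (Ju (S x, x))) * norm w" if "G' \<in> Gs x D" for G'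
  proof -
    have "(norm (Jy (S x, x)) * mnorm G' + norm (Ju (S x, x))) * norm w
        \<le> (norm (Jy (S x, x)) * M + norm (Ju (S x, x))) * norm w"
      using M[OF that] by (intro mult_right_mono add_mono mult_left_mono) auto
    then show ?thesis using abs_slope_le[of G' x w] by linarith
  qed
  then have "bdd_above ((\<lambda>G. slope G x w) ` Gs x D)" by (rule bdd_aboveI2)
  then show ?thesis unfolding model_phi_eq_SUP by (rule cSUP_upper[OF assms(2)])
qed

lemma model_phi_le:
  "D > 0 \<Longrightarrow> (\<And>G. G \<in> Gs x D \<Longrightarrow> slope G x w \<le> c) \<Longrightarrow> model_phi Gs S Jy Ju x D w \<le> c"
  unfolding model_phi_eq_SUP by (rule cSUP_least[OF Gs_ne])

lemma neg_model_phi_le_model_psi: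
  assumes D: "D > 0" and h: "norm h \<le> 1"
  shows "- model_phi Gs S Jy Ju x D h \<le> model_psi Gs S Jy Ju x D"
proof -
  obtain G where G: "G \<in> Gs x D" using Gs_ne[OF D] by blast
  define c where "c = norm (Jy (S x, x)) * mnorm G + norm (Ju (S x, x))"
  have "- c \<le> model_phi Gs S Jy Ju x D h'" if "norm h' \<le> 1" for h'
  proof -
    have "\<bar>slope G x h'\<bar> \<le> c * norm h'" using abs_slope_le[of G x h'] by (simp add: c_def)
    also have "\<dots> \<le> c" using that by (simp add: c_def mnorm_nonneg mult_left_le)
    finally show ?thesis using slope_le_model_phi[OF D G, of h'] by linarith
  qed
  then have "bdd_below ((\<lambda>h. model_phi Gs S Jy Ju x D h) ` cball 0 1)" by (auto intro!: bdd_belowI2)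
  then have "(INF h\<in>cball 0 1. model_phi Gs S Jy Ju x D h) \<le> model_phi Gs S Jy Ju x D h"
    by (rule cINF_lower) (simp add: h)
  then show ?thesis unfolding model_psi_def by simp
qed

lemma nonstationary_descent_direction:
  assumes "0 \<notin> clarke_subdiff f x0"
  obtains h c where "norm h = 1" "c > 0" "\<And>W. W \<in> bouligand S x0 \<Longrightarrow> slope W x0 h \<le> - c"
proof -
  obtain h0 where "\<not> ereal (0 \<bullet> h0) \<le> clarke_dd f x0 h0" using assms unfolding clarke_subdiff_def by blast
  then have neg: "clarke_dd f x0 h0 < 0" by (simp add: not_le zero_ereal_def)
  obtain W0 where W0: "W0 \<in> bouligand S x0" using D_cond[of x0 h0] by blast
  obtain c0 where c0: "clarke_dd f x0 h0 = ereal c0"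
    using slope_le_clarke_dd[OF W0, of h0] neg by (cases "clarke_dd f x0 h0") auto
  have c0_neg: "c0 < 0" using neg c0 by (simp add: zero_ereal_def)
  have slope_le: "slope W x0 h0 \<le> c0" if "W \<in> bouligand S x0" for W
    using slope_le_clarke_dd[OF that, of h0] c0 by simp
  have "h0 \<noteq> 0" using slope_le[OF W0] c0_neg by (auto simp: slope_def)
  then have h0_pos: "norm h0 > 0" by simp
  show ?thesis
  proof
    show "norm ((1 / norm h0) *\<^sub>R h0) = 1" using h0_pos by simp
    show "- c0 / norm h0 > 0" using c0_neg h0_pos by (simp add: divide_neg_pos)
    fix W assume W: "W \<in> bouligand S x0"
    have "slope W x0 ((1 / norm h0) *\<^sub>R h0) = slope W x0 h0 / norm h0" by (simp add: slope_scaleR)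
    also have "\<dots> \<le> c0 / norm h0" using slope_le[OF W] h0_pos by (simp add: divide_right_mono)
    finally show "slope W x0 ((1 / norm h0) *\<^sub>R h0) \<le> - (- c0 / norm h0)" by simp
  qed
qed

lemma model_psi_lower_bound:
  assumes D: "D > 0" and h: "norm h = 1"
    and descent: "\<And>W. W \<in> bouligand S x0 \<Longrightarrow> slope W x0 h \<le> - c"
    and LB: "\<And>W. W \<in> bouligand S x0 \<Longrightarrow> norm (W *v h) \<le> LB"
  shows "c - (norm (Jy (S x, x)) * (SUP G\<in>Gs x D. INF W\<in>bouligand S x0. mnorm (G - W))
            + norm (Jy (S x, x) - Jy (S x0, x0)) * LB + norm (Ju (S x, x) - Ju (S x0, x0)))
         \<le> model_psi Gs S Jy Ju x D"
proof -
  define a where "a = (SUP G\<in>Gs x D. INF W\<in>bouligand S x0. mnorm (G - W))"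
  define b where "b = norm (Jy (S x, x)) * a + norm (Jy (S x, x) - Jy (S x0, x0)) * LB
      + norm (Ju (S x, x) - Ju (S x0, x0))"
  obtain W0 where W0: "W0 \<in> bouligand S x0" using D_cond[of x0 0] by blast
  obtain M where M: "\<And>G. G \<in> Gs x D \<Longrightarrow> mnorm G \<le> M" using Gs_mnorm_bounded[OF D] by blast
  have inf_bdd: "bdd_below ((\<lambda>W. mnorm (G - W)) ` bouligand S x0)" for G
    by (auto intro!: bdd_belowI2 mnorm_nonneg)
  have "(INF W\<in>bouligand S x0. mnorm (G - W)) \<le> M + mnorm W0" if "G \<in> Gs x D" for G
    using cINF_lower[OF inf_bdd W0, of G] mnorm_diff_le[of G W0] M[OF that] by linarith
  then have sup_bdd: "bdd_above ((\<lambda>G. INF W\<in>bouligand S x0. mnorm (G - W)) ` Gs x D)"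
    by (rule bdd_aboveI2)
  have "slope G x h \<le> - c + b" if G: "G \<in> Gs x D" for G
  proof (rule field_le_epsilon)
    fix e :: real assume e: "e > 0"
    define \<epsilon> where "\<epsilon> = e / (norm (Jy (S x, x)) + 1)"
    have n1: "norm (Jy (S x, x)) + 1 > 0" by (simp add: add_nonneg_pos)
    then have \<epsilon>_pos: "\<epsilon> > 0" using e by (simp add: \<epsilon>_def)
    have "norm (Jy (S x, x)) * \<epsilon> \<le> (norm (Jy (S x, x)) + 1) * \<epsilon>" using \<epsilon>_pos by simp
    also have "\<dots> = e" using n1 by (simp add: \<epsilon>_def)
    finally have \<epsilon>_le: "norm (Jy (S x, x)) * \<epsilon> \<le> e" .
    have "(INF W\<in>bouligand S x0. mnorm (G - W)) < a + \<epsilon>"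
      using cSUP_upper[OF G sup_bdd] \<epsilon>_pos by (simp add: a_def)
    then obtain W where W: "W \<in> bouligand S x0" "mnorm (G - W) < a + \<epsilon>"
      using cINF_less_iff[OF _ inf_bdd] W0 by blast
    have "slope G x h \<le> slope W x0 h + norm (Jy (S x, x)) * mnorm (G - W)
        + norm (Jy (S x, x) - Jy (S x0, x0)) * LB + norm (Ju (S x, x) - Ju (S x0, x0))"
    proof -
      have "norm (Jy (S x, x)) * norm ((G - W) *v h) \<le> norm (Jy (S x, x)) * mnorm (G - W)"
        using norm_matrix_vector_mult_le[of "G - W" h] h by (intro mult_left_mono) auto
      moreover have "norm (Jy (S x, x) - Jy (S x0, x0)) * norm (W *v h)
          \<le> norm (Jy (S x, x) - Jy (S x0, x0)) * LB"
        using LB[OF W(1)] by (intro mult_left_mono) auto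
      ultimately show ?thesis using slope_difference_le[of G x h W x0, unfolded h mult_1_right] by linarith
    qed
    also have "norm (Jy (S x, x)) * mnorm (G - W) \<le> norm (Jy (S x, x)) * a + e"
      using mult_left_mono[OF less_imp_le[OF W(2)] norm_ge_zero[of "Jy (S x, x)"]] \<epsilon>_le
      by (simp add: distrib_left)
    finally show "slope G x h \<le> - c + b + e"
      using descent[OF W(1)] by (simp add: b_def)
  qed
  then have "model_phi Gs S Jy Ju x D h \<le> - c + b" by (rule model_phi_le[OF D])
  moreover have "- model_phi Gs S Jy Ju x D h \<le> model_psi Gs S Jy Ju x D"
    using neg_model_phi_le_model_psi[OF D] h by simp
  ultimately show ?thesis unfolding a_def[symmetric] b_def[symmetric] by simp
qed

text \<open>This is where condition (G2) enters: near a non-stationary point the model predicts a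
  uniform decrease, however small the radius.\<close>
lemma model_psi_bounded_below_near:
  assumes nonstat: "0 \<notin> clarke_subdiff f x0"
  shows "\<exists>c>0. \<exists>\<delta>>0. \<forall>x D. norm (x - x0) < \<delta> \<longrightarrow> 0 < D \<longrightarrow> D < \<delta> \<longrightarrow> c \<le> model_psi Gs S Jy Ju x D"
proof -
  obtain h c where h: "norm h = 1" and c: "c > 0"
    and descent: "\<And>W. W \<in> bouligand S x0 \<Longrightarrow> slope W x0 h \<le> - c"
    using nonstationary_descent_direction[OF nonstat] by blast
  obtain LB where LB: "\<And>W. W \<in> bouligand S x0 \<Longrightarrow> norm (W *v h) \<le> LB"
    using bouligand_bounded[of x0] h by fastforce
  have "\<exists>\<delta>>0. \<forall>x D. norm (x - x0) < \<delta> \<longrightarrow> 0 < D \<longrightarrow> D < \<delta> \<longrightarrow> c / 2 \<le> model_psi Gs S Jy Ju x D"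
  proof (rule ccontr)
    assume "\<not> ?thesis"
    then have "\<exists>x D. norm (x - x0) < inverse (real (Suc j)) \<and> 0 < D \<and> D < inverse (real (Suc j))
        \<and> model_psi Gs S Jy Ju x D < c / 2" for j
      by (metis not_le inverse_positive_iff_positive of_nat_0_less_iff zero_less_Suc)
    then obtain xs Ds where seq: "\<And>j. norm (xs j - x0) < inverse (real (Suc j)) \<and> 0 < Ds j
        \<and> Ds j < inverse (real (Suc j)) \<and> model_psi Gs S Jy Ju (xs j) (Ds j) < c / 2"
      by metis
    have "(\<lambda>j. xs j - x0) \<longlonglongrightarrow> 0"
      using seq by (intro Lim_null_comparison[OF always_eventually LIMSEQ_inverse_real_of_nat])
        (auto intro: less_imp_le)
    then have xs: "xs \<longlonglongrightarrow> x0" by (rule LIM_zero_cancel)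
    have Ds: "Ds \<longlonglongrightarrow> 0"
      using seq by (intro Lim_null_comparison[OF always_eventually LIMSEQ_inverse_real_of_nat])
        (auto intro: less_imp_le simp: abs_of_pos)
    have Ds_pos: "\<forall>j. Ds j > 0" using seq by blast
    define b where "b j = norm (Jy (S (xs j), xs j))
        * (SUP G\<in>Gs (xs j) (Ds j). INF W\<in>bouligand S x0. mnorm (G - W))
        + norm (Jy (S (xs j), xs j) - Jy (S x0, x0)) * LB
        + norm (Ju (S (xs j), xs j) - Ju (S x0, x0))" for j
    have "b \<longlonglongrightarrow> norm (Jy (S x0, x0)) * 0 + norm (Jy (S x0, x0) - Jy (S x0, x0)) * LB
        + norm (Ju (S x0, x0) - Ju (S x0, x0))"
      unfolding b_def
      by (intro tendsto_intros G2[OF xs Ds Ds_pos nonstat]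
          isCont_tendsto_compose[OF Jy_comp_isCont xs] isCont_tendsto_compose[OF Ju_comp_isCont xs])
    then have "eventually (\<lambda>j. b j < c / 2) sequentially"
      using c by (intro order_tendstoD(2)) auto
    then obtain j where "b j < c / 2" by (auto simp: eventually_sequentially)
    moreover have "c - b j \<le> model_psi Gs S Jy Ju (xs j) (Ds j)"
      unfolding b_def using model_psi_lower_bound[OF _ h descent LB] seq by blast
    ultimately show False using seq[of j] by linarith
  qed
  then show ?thesis using c by (intro exI[of _ "c / 2"]) auto
qed

lemma reduction_le_model:
  assumes D: "D > 0" and w: "norm w \<le> D"
    and modulus: "\<And>y. y \<in> cball x D \<Longrightarrow>
       norm (Jy (S y, y) - Jy (S x, x)) * L + norm (Ju (S y, y) - Ju (S x, x)) \<le> \<tau>"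
    and dS_bound: "\<And>y. y \<in> cball x D \<Longrightarrow> norm (dS y w) \<le> L * norm w"
  shows "f (x + w) - f x \<le> model_phi Gs S Jy Ju x D w + \<tau> * norm w"
proof -
  define h where "h t = f (x + t *\<^sub>R w)" for t :: real
  have "continuous_on {0..1} h"
    unfolding h_def
    by (intro continuous_at_imp_continuous_on ballI continuous_at_compose[OF _ f_isCont, unfolded o_def]
        continuous_intros)
  moreover have "\<exists>v. ((\<lambda>s. (h (t + s) - h t) / s) \<longlongrightarrow> v) (at_right 0)
      \<and> v \<le> model_phi Gs S Jy Ju x D w + \<tau> * norm w" if t: "0 \<le> t" "t < 1" for t
  proof -
    define y where "y = x + t *\<^sub>R w"
    obtain G where G: "G \<in> bouligand S y" "dS y w = G *v w" using D_cond[of y w] by blast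
    have "norm (t *\<^sub>R w) \<le> norm w" using t by (simp add: mult_left_le_one_le)
    then have y: "y \<in> cball x D" using w by (simp add: y_def dist_norm)
    have "(\<lambda>s. (h (t + s) - h t) / s) = (\<lambda>s. (f (y + s *\<^sub>R w) - f y) / s)"
      by (simp add: h_def y_def scaleR_add_left add.assoc)
    moreover have "((\<lambda>s. (f (y + s *\<^sub>R w) - f y) / s) \<longlongrightarrow> slope G y w) (at_right 0)"
      unfolding f_def slope_def G(2)[symmetric] by (rule directional_quotient_chain[OF J_deriv S_dirdiff])
    moreover have "slope G y w \<le> model_phi Gs S Jy Ju x D w + \<tau> * norm w"
    proof -
      have "slope G y w - slope G x w
          \<le> norm (Jy (S y, y) - Jy (S x, x)) * norm (G *v w) + norm (Ju (S y, y) - Ju (S x, x)) * norm w"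
        using slope_difference_le[of G y w G x] by simp
      also have "\<dots> \<le> norm (Jy (S y, y) - Jy (S x, x)) * (L * norm w)
          + norm (Ju (S y, y) - Ju (S x, x)) * norm w"
        using dS_bound[OF y] G(2) by (intro add_mono mult_left_mono) auto
      also have "\<dots> \<le> \<tau> * norm w"
        using mult_right_mono[OF modulus[OF y] norm_ge_zero[of w]] by (simp add: algebra_simps)
      finally show ?thesis using slope_le_model_phi[OF D, of G x w] G1[OF D, of x] G(1) y by fastforce
    qed
    ultimately show ?thesis by auto
  qed
  ultimately have "h 1 - h 0 \<le> model_phi Gs S Jy Ju x D w + \<tau> * norm w"
    by (rule increment_le_of_right_quotients)
  then show ?thesis by (simp add: h_def)
qed

lemma reduction_le_model_near:
  assumes \<tau>: "\<tau> > 0"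
  shows "\<exists>\<delta>>0. \<forall>x D w. norm (x - x0) < \<delta> \<longrightarrow> 0 < D \<longrightarrow> D < \<delta> \<longrightarrow> norm w \<le> D \<longrightarrow>
           f (x + w) - f x \<le> model_phi Gs S Jy Ju x D w + \<tau> * norm w"
proof -
  obtain r L where r: "r > 0" and L: "L-lipschitz_on (cball x0 r) S" using S_loclip[of x0] by blast
  have L_nonneg: "L \<ge> 0" using lipschitz_on_nonneg[OF L] .
  define grad where "grad x = (Jy (S x, x), Ju (S x, x))" for x
  have "uniformly_continuous_on (cball x0 r) grad"
    unfolding grad_def
    by (intro compact_uniformly_continuous continuous_at_imp_continuous_on ballI isCont_Pair
        Jy_comp_isCont Ju_comp_isCont compact_cball)
  moreover have "\<tau> / (L + 1) > 0" using \<tau> L_nonneg by simp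
  ultimately obtain \<delta>u where \<delta>u: "\<delta>u > 0" and uc: "\<And>x y. x \<in> cball x0 r \<Longrightarrow> y \<in> cball x0 r \<Longrightarrow>
      dist y x < \<delta>u \<Longrightarrow> dist (grad y) (grad x) < \<tau> / (L + 1)"
    unfolding uniformly_continuous_on_def by metis
  define \<delta> where "\<delta> = min (r / 2) \<delta>u"
  have "f (x + w) - f x \<le> model_phi Gs S Jy Ju x D w + \<tau> * norm w"
    if x: "norm (x - x0) < \<delta>" and D: "0 < D" "D < \<delta>" and w: "norm w \<le> D" for x D w
  proof (rule reduction_le_model[OF D(1) w])
    fix y assume y: "y \<in> cball x D"
    have "dist x0 y \<le> dist x0 x + dist x y" by (rule dist_triangle)
    also have "\<dots> < r" using x y D by (simp add: \<delta>_def dist_norm norm_minus_commute)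
    finally have y_near: "y \<in> ball x0 r" by simp
    have "norm (x - x0) < r / 2" using x by (simp add: \<delta>_def)
    then have x_near: "x \<in> cball x0 r" using r by (simp add: dist_norm norm_minus_commute)
    have "dist y x < \<delta>u" using y D by (simp add: \<delta>_def dist_commute)
    then have "dist (grad y) (grad x) < \<tau> / (L + 1)" using uc[OF x_near] y_near by simp
    then have "norm (Jy (S y, y) - Jy (S x, x)) \<le> \<tau> / (L + 1)"
      and "norm (Ju (S y, y) - Ju (S x, x)) \<le> \<tau> / (L + 1)"
      using dist_fst_le[of "grad y" "grad x"] dist_snd_le[of "grad y" "grad x"]
      by (simp_all add: grad_def dist_norm)
    then have "norm (Jy (S y, y) - Jy (S x, x)) * L + norm (Ju (S y, y) - Ju (S x, x))
        \<le> \<tau> / (L + 1) * L + \<tau> / (L + 1)"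
      using L_nonneg by (intro add_mono mult_right_mono) auto
    also have "\<dots> = \<tau> / (L + 1) * (L + 1)" by (simp add: distrib_left)
    also have "\<dots> = \<tau>" using L_nonneg by simp
    finally show "norm (Jy (S y, y) - Jy (S x, x)) * L + norm (Ju (S y, y) - Ju (S x, x)) \<le> \<tau>" .
    have "ball y (r - dist x0 y) \<subseteq> cball x0 r"
    proof
      fix z assume "z \<in> ball y (r - dist x0 y)"
      then show "z \<in> cball x0 r" using dist_triangle[of x0 z y] by simp
    qed
    moreover have "r - dist x0 y > 0" using y_near by simp
    ultimately show "norm (dS y w) \<le> L * norm w"
      using lipschitz_directional_derivative_bound[OF S_dirdiff L] by blast
  qed
  then show ?thesis using r \<delta>u by (intro exI[of _ \<delta>]) (auto simp: \<delta>_def)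
qed

end

subsection \<open>The trust-region iteration\<close>

lemma min_div_ge:
  assumes "0 \<le> b" "b \<le> C" "C > 0" "a \<ge> 0"
  shows "min D (a / C) \<le> min_div D a b"
proof (cases "b = 0")
  case False
  then have "a / C \<le> a / b" using assms by (intro divide_left_mono) auto
  then show ?thesis using False by (auto simp: min_div_def)
qed (simp add: min_div_def)

locale trust_region = composite_problem J Jy Ju S dS f Gs
  for J :: "(real^'m) \<times> (real^'n) \<Rightarrow> real"
    and Jy :: "(real^'m) \<times> (real^'n) \<Rightarrow> real^'m"
    and Ju :: "(real^'m) \<times> (real^'n) \<Rightarrow> real^'n"
    and S :: "real^'n \<Rightarrow> real^'m"
    and dS :: "real^'n \<Rightarrow> real^'n \<Rightarrow> real^'m"
    and f :: "real^'n \<Rightarrow> real"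
    and Gs :: "real^'n \<Rightarrow> real \<Rightarrow> (real^'n^'m) set" +
  fixes Dmin eta1 eta2 beta1 beta2 mu CH :: real
    and u d g :: "nat \<Rightarrow> real^'n"
    and H :: "nat \<Rightarrow> real^'n^'n"
    and Delta rho :: "nat \<Rightarrow> real"
  assumes params: "Dmin > 0" "0 < eta1" "eta1 < eta2" "eta2 < 1" "0 < beta1" "beta1 < 1"
                "1 < beta2" "0 < mu" "mu \<le> 1" "Delta 0 > Dmin"
    and g_sub: "\<And>k. g k \<in> clarke_subdiff f (u k)"
    and no_stop: "\<And>k. g k \<noteq> 0"
    and step_large: "\<And>k. Delta k \<ge> Dmin \<Longrightarrow>
          norm (d k) \<le> Delta k \<and>
          f (u k) - (f (u k) + g k \<bullet> d k + (1/2) * (d k \<bullet> (H k *v d k)))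
            \<ge> mu / 2 * norm (g k) * min_div (Delta k) (norm (g k)) (mnorm (H k)) \<and>
          rho k = (f (u k) - f (u k + d k)) /
                  (f (u k) - (f (u k) + g k \<bullet> d k + (1/2) * (d k \<bullet> (H k *v d k))))"
    and step_small: "\<And>k. Delta k < Dmin \<Longrightarrow>
          norm (d k) \<le> Delta k \<and>
          f (u k) - (f (u k) + model_phi Gs S Jy Ju (u k) (Delta k) (d k) + (1/2) * (d k \<bullet> (H k *v d k)))
            \<ge> mu / 2 * model_psi Gs S Jy Ju (u k) (Delta k)
                * min_div (Delta k) (model_psi Gs S Jy Ju (u k) (Delta k)) (mnorm (H k)) \<and>
          rho k = (if model_psi Gs S Jy Ju (u k) (Delta k) > norm (g k) * Delta k
                   then (f (u k) - f (u k + d k)) /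
                        (f (u k) - (f (u k) + model_phi Gs S Jy Ju (u k) (Delta k) (d k)
                                     + (1/2) * (d k \<bullet> (H k *v d k))))
                   else 0)"
    and u_upd: "\<And>k. u (Suc k) = (if rho k \<le> eta1 then u k else u k + d k)"
    and Delta_upd: "\<And>k. Delta (Suc k) = (if rho k \<le> eta1 then beta1 * Delta k
                        else if rho k \<le> eta2 then max Dmin (Delta k)
                        else max Dmin (beta2 * Delta k))"
    and CH: "CH > 0" "\<And>k. mnorm (H k) \<le> CH"
begin

definition predicted_reduction :: "nat \<Rightarrow> real" where
  "predicted_reduction k = (if Dmin \<le> Delta k
     then f (u k) - (f (u k) + g k \<bullet> d k + (1/2) * (d k \<bullet> (H k *v d k)))
     else f (u k) - (f (u k) + model_phi Gs S Jy Ju (u k) (Delta k) (d k) + (1/2) * (d k \<bullet> (H k *v d k))))"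

lemma Delta_pos: "Delta k > 0"
  by (induction k) (use params in \<open>auto simp: Delta_upd\<close>)

lemma rejected_step: "rho k \<le> eta1 \<Longrightarrow> u (Suc k) = u k \<and> Delta (Suc k) = beta1 * Delta k"
  by (simp add: u_upd Delta_upd)

lemma successful_step:
  assumes r: "rho k > eta1"
  shows "u (Suc k) = u k + d k" "Dmin \<le> Delta (Suc k)" "predicted_reduction k > 0"
    "eta1 * predicted_reduction k \<le> f (u k) - f (u (Suc k))"
    "Delta k < Dmin \<Longrightarrow> norm (g k) * Delta k < model_psi Gs S Jy Ju (u k) (Delta k)"
proof -
  show u_Suc: "u (Suc k) = u k + d k" using r by (simp add: u_upd)
  show "Dmin \<le> Delta (Suc k)" using r by (simp add: Delta_upd)
  have g_pos: "norm (g k) > 0" using no_stop by simp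
  have min_div_pos: "min_div (Delta k) a (mnorm (H k)) > 0" if "a > 0" for a
    using that Delta_pos[of k] mnorm_nonneg[of "H k"] by (auto simp: min_div_def)
  show psi: "norm (g k) * Delta k < model_psi Gs S Jy Ju (u k) (Delta k)" if "Delta k < Dmin"
    using step_small[OF that] r params(2) by (auto split: if_splits)
  have "predicted_reduction k > 0 \<and> rho k = (f (u k) - f (u k + d k)) / predicted_reduction k"
  proof (cases "Dmin \<le> Delta k")
    case True
    have "mu / 2 * norm (g k) * min_div (Delta k) (norm (g k)) (mnorm (H k)) > 0"
      using params g_pos min_div_pos[OF g_pos] by simp
    then show ?thesis using step_large[OF True] True by (simp add: predicted_reduction_def)
  next
    case False
    then have small: "Delta k < Dmin" by simp
    have psi_pos: "model_psi Gs S Jy Ju (u k) (Delta k) > 0"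
      using psi[OF small] mult_pos_pos[OF g_pos Delta_pos[of k]] by linarith
    have "mu / 2 * model_psi Gs S Jy Ju (u k) (Delta k)
        * min_div (Delta k) (model_psi Gs S Jy Ju (u k) (Delta k)) (mnorm (H k)) > 0"
      using params psi_pos min_div_pos[OF psi_pos] by simp
    then show ?thesis
      using step_small[OF small] psi[OF small] False by (simp add: predicted_reduction_def)
  qed
  then show pos: "predicted_reduction k > 0"
    and "eta1 * predicted_reduction k \<le> f (u k) - f (u (Suc k))"
    using r u_Suc by (auto simp: field_simps)
qed

lemma f_iterates_decseq: "decseq (\<lambda>k. f (u k))"
proof (rule decseq_SucI)
  fix k show "f (u (Suc k)) \<le> f (u k)"
  proof (cases "rho k > eta1")
    case True
    then have "eta1 * predicted_reduction k > 0" using successful_step(3) params(2) by simp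
    then show ?thesis using successful_step(4)[OF True] by linarith
  qed (simp add: rejected_step)
qed

lemma f_iterates_tendsto:
  assumes r: "strict_mono r" "(u \<circ> r) \<longlonglongrightarrow> ubar"
  shows "(\<lambda>k. f (u k)) \<longlonglongrightarrow> f ubar"
proof -
  have sub: "(\<lambda>j. f (u (r j))) \<longlonglongrightarrow> f ubar"
    using isCont_tendsto_compose[OF f_isCont r(2)] by (simp add: o_def)
  have "f ubar \<le> f (u k)" for k
  proof (rule tendsto_upperbound[OF sub])
    show "eventually (\<lambda>j. f (u (r j)) \<le> f (u k)) sequentially"
      unfolding eventually_sequentially
    proof (intro exI allI impI)
      fix j assume "k \<le> j"
      then have "k \<le> r j" using seq_suble[OF r(1), of j] by simp
      then show "f (u (r j)) \<le> f (u k)" using f_iterates_decseq by (simp add: decseq_def)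
    qed
  qed simp
  then obtain L where L: "(\<lambda>k. f (u k)) \<longlonglongrightarrow> L"
    using decseq_convergent[OF f_iterates_decseq] by blast
  have "(\<lambda>j. f (u (r j))) \<longlonglongrightarrow> L" using LIMSEQ_subseq_LIMSEQ[OF L r(1)] by (simp add: o_def)
  then have "L = f ubar" using sub LIMSEQ_unique by blast
  then show ?thesis using L by simp
qed

lemma small_radius_step_successful:
  assumes small: "Delta k < Dmin" and c: "c > 0"
    and psi: "c \<le> model_psi Gs S Jy Ju (u k) (Delta k)"
    and g: "norm (g k) * Delta k < c"
    and H: "CH * Delta k < (1 - eta1) * mu * c / 2"
    and model_error: "f (u k + d k) - f (u k)
       \<le> model_phi Gs S Jy Ju (u k) (Delta k) (d k) + (1 - eta1) * mu * c / 4 * norm (d k)"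
  shows "rho k > eta1"
proof -
  define D where "D = Delta k"
  define P where "P = model_psi Gs S Jy Ju (u k) D"
  define q where "q = predicted_reduction k"
  define \<tau> where "\<tau> = (1 - eta1) * mu * c / 4"
  have D_pos: "D > 0" using Delta_pos by (simp add: D_def)
  have eta1: "0 < eta1" "eta1 < 1" and mu: "0 < mu" "mu \<le> 1" using params by auto
  have step: "norm (d k) \<le> D" "mu / 2 * P * min_div D P (mnorm (H k)) \<le> q"
    "rho k = (f (u k) - f (u k + d k)) / q"
    "q = - model_phi Gs S Jy Ju (u k) D (d k) - (1/2) * (d k \<bullet> (H k *v d k))"
    using step_small[OF small] psi g small
    unfolding D_def P_def q_def predicted_reduction_def by auto
  have "(1 - eta1) * mu \<le> 1" using eta1 mu by (simp add: mult_le_one)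
  then have "(1 - eta1) * mu * c \<le> c" using c by (simp add: mult_left_le_one_le mult_le_one)
  then have two_\<tau>: "2 * \<tau> \<le> c" unfolding \<tau>_def using c by linarith
  have "min_div D P (mnorm (H k)) = D"
  proof (cases "mnorm (H k) = 0")
    case False
    have "D * mnorm (H k) \<le> D * CH" using CH(2) D_pos by simp
    also have "\<dots> < P" using H two_\<tau> psi by (simp add: D_def P_def \<tau>_def mult.commute)
    finally have "D \<le> P / mnorm (H k)"
      using False mnorm_nonneg[of "H k"] by (simp add: le_divide_eq)
    then show ?thesis using False by (simp add: min_div_def)
  qed (simp add: min_div_def)
  moreover have "mu / 2 * c * D \<le> mu / 2 * P * D"
    using psi mu D_pos by (intro mult_right_mono mult_left_mono) (auto simp: P_def D_def)
  ultimately have q_lower: "mu / 2 * c * D \<le> q" using step(2) by simp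
  have "0 < mu / 2 * c * D" using mu c D_pos by simp
  then have q_pos: "q > 0" using q_lower by linarith
  have "mnorm (H k) * norm (d k) * norm (d k) \<le> CH * D * D"
    using step(1) CH mnorm_nonneg[of "H k"] D_pos by (intro mult_mono) auto
  then have dHd: "\<bar>d k \<bullet> (H k *v d k)\<bar> \<le> CH * D * D"
    using abs_quadratic_form_le[of "d k" "H k"] by linarith
  have "\<tau> * norm (d k) \<le> \<tau> * D" using step(1) eta1 mu c by (simp add: \<tau>_def)
  then have actual: "q - CH * D * D / 2 - \<tau> * D \<le> f (u k) - f (u k + d k)"
    using model_error dHd step(4) by (simp add: D_def \<tau>_def)
  have "CH * D * D / 2 < \<tau> * D" using H D_pos by (simp add: D_def \<tau>_def)
  moreover have "2 * \<tau> * D = (1 - eta1) * (mu / 2 * c * D)" by (simp add: \<tau>_def)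
  moreover have "(1 - eta1) * (mu / 2 * c * D) \<le> (1 - eta1) * q"
    using q_lower eta1 by (intro mult_left_mono) auto
  moreover have "(1 - eta1) * q = q - eta1 * q" by (simp add: algebra_simps)
  ultimately have "eta1 * q < f (u k) - f (u k + d k)" using actual by linarith
  then show ?thesis using step(3) q_pos by (simp add: less_divide_eq mult.commute)
qed

lemma small_radius_successful_near:
  assumes nonstat: "0 \<notin> clarke_subdiff f ubar"
  shows "\<exists>\<delta>>0. \<exists>\<delta>D>0. \<delta>D < Dmin \<and> (\<forall>k. norm (u k - ubar) < \<delta> \<longrightarrow> Delta k < \<delta>D \<longrightarrow> rho k > eta1)"
proof -
  obtain c \<delta>1 where c: "c > 0" and \<delta>1: "\<delta>1 > 0"
    and psi: "\<And>x D. norm (x - ubar) < \<delta>1 \<Longrightarrow> 0 < D \<Longrightarrow> D < \<delta>1 \<Longrightarrow> c \<le> model_psi Gs S Jy Ju x D"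
    using model_psi_bounded_below_near[OF nonstat] by blast
  define \<tau> where "\<tau> = (1 - eta1) * mu * c / 4"
  have \<tau>: "\<tau> > 0" using params c by (simp add: \<tau>_def)
  obtain \<delta>2 where \<delta>2: "\<delta>2 > 0" and model_error: "\<And>x D w. norm (x - ubar) < \<delta>2 \<Longrightarrow> 0 < D \<Longrightarrow> D < \<delta>2 \<Longrightarrow>
      norm w \<le> D \<Longrightarrow> f (x + w) - f x \<le> model_phi Gs S Jy Ju x D w + \<tau> * norm w"
    using reduction_le_model_near[OF \<tau>, of ubar] by blast
  obtain \<delta>3 Lg where \<delta>3: "\<delta>3 > 0"
    and g_bound: "\<And>x g. norm (x - ubar) < \<delta>3 \<Longrightarrow> g \<in> clarke_subdiff f x \<Longrightarrow> norm g \<le> Lg"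
    using clarke_subdiff_locally_bounded[of ubar] by blast
  define \<delta> where "\<delta> = min \<delta>1 (min \<delta>2 \<delta>3)"
  define \<delta>D where "\<delta>D = min (min \<delta>1 \<delta>2) (min (Dmin / 2) (min (c / (\<bar>Lg\<bar> + 1)) (2 * \<tau> / CH)))"
  have "rho k > eta1" if near: "norm (u k - ubar) < \<delta>" and small: "Delta k < \<delta>D" for k
  proof (rule small_radius_step_successful[OF _ c])
    have D_pos: "Delta k > 0" by (rule Delta_pos)
    show "Delta k < Dmin" using small params by (simp add: \<delta>D_def)
    show "c \<le> model_psi Gs S Jy Ju (u k) (Delta k)"
      using psi near small D_pos by (simp add: \<delta>_def \<delta>D_def)
    have "norm (g k) * Delta k \<le> (\<bar>Lg\<bar> + 1) * Delta k"
    proof (rule mult_right_mono)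
      have "norm (g k) \<le> Lg" using g_bound[OF _ g_sub] near by (simp add: \<delta>_def)
      then show "norm (g k) \<le> \<bar>Lg\<bar> + 1" by linarith
    qed (use D_pos in simp)
    also have "\<dots> < c" using small by (simp add: \<delta>D_def less_divide_eq mult.commute add_pos_nonneg)
    finally show "norm (g k) * Delta k < c" .
    have "Delta k < 2 * \<tau> / CH" using small by (simp add: \<delta>D_def)
    then have "CH * Delta k < 2 * \<tau>" using CH(1) by (simp add: less_divide_eq mult.commute)
    then show "CH * Delta k < (1 - eta1) * mu * c / 2" unfolding \<tau>_def by linarith
    show "f (u k + d k) - f (u k)
        \<le> model_phi Gs S Jy Ju (u k) (Delta k) (d k) + (1 - eta1) * mu * c / 4 * norm (d k)"
      using model_error[of "u k" "Delta k" "d k"] step_small[of k] near small D_pos params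
      by (simp add: \<delta>_def \<delta>D_def \<tau>_def)
  qed
  moreover have "\<delta> > 0" using \<delta>1 \<delta>2 \<delta>3 by (simp add: \<delta>_def)
  moreover have "\<delta>D > 0" "\<delta>D < Dmin"
    using \<delta>1 \<delta>2 params c \<tau> CH(1) by (auto simp: \<delta>D_def add_pos_nonneg)
  ultimately show ?thesis by blast
qed

text \<open>Rejected steps keep the iterate fixed and shrink the radius, so near \<open>ubar\<close> a successful
  step with radius bounded below must eventually follow.\<close>
lemma successful_step_after:
  assumes local: "\<forall>k. norm (u k - ubar) < \<delta> \<longrightarrow> Delta k < \<delta>D \<longrightarrow> rho k > eta1"
    and \<delta>D: "\<delta>D > 0" "\<delta>D < Dmin"
    and near: "norm (u k - ubar) < \<delta>" and k: "k \<ge> 1"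
  shows "\<exists>s\<ge>k. u s = u k \<and> beta1 * \<delta>D \<le> Delta s \<and> rho s > eta1"
proof -
  have ex: "\<exists>i. k \<le> i \<and> rho i > eta1"
  proof (rule ccontr)
    assume "\<not> ?thesis"
    then have rejected: "\<And>i. k \<le> i \<Longrightarrow> rho i \<le> eta1" by (meson not_less)
    have stay: "u (k + n) = u k \<and> Delta (k + n) = beta1 ^ n * Delta k" for n
      by (induction n) (use rejected rejected_step in auto)
    have "(\<lambda>n. beta1 ^ n * Delta k) \<longlonglongrightarrow> 0 * Delta k"
      using params by (intro tendsto_mult LIMSEQ_power_zero tendsto_const) auto
    then have "eventually (\<lambda>n. beta1 ^ n * Delta k < \<delta>D) sequentially"
      using \<delta>D by (intro order_tendstoD(2)) auto
    then obtain n where "beta1 ^ n * Delta k < \<delta>D" by (auto simp: eventually_sequentially)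
    then have "rho (k + n) > eta1" using local stay[of n] near by simp
    with rejected[of "k + n"] show False by simp
  qed
  define s where "s = (LEAST i. k \<le> i \<and> rho i > eta1)"
  have s: "k \<le> s" "rho s > eta1" using LeastI_ex[OF ex] by (simp_all add: s_def)
  have before_s: "rho i \<le> eta1" if "k \<le> i" "i < s" for i
    using not_less_Least[of i "\<lambda>i. k \<le> i \<and> rho i > eta1"] that by (simp add: s_def not_less)
  have same: "u (k + n) = u k" if "k + n \<le> s" for n
    using that by (induction n) (use before_s rejected_step in auto)
  then have us: "u s = u k" using same[of "s - k"] s(1) by simp
  obtain s' where s': "s = Suc s'" using s(1) k by (cases s) auto
  have "beta1 * \<delta>D \<le> Delta s"
  proof (cases "rho s' > eta1")
    case True
    have "beta1 * \<delta>D \<le> \<delta>D" using params \<delta>D by (simp add: mult_left_le_one_le)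
    then show ?thesis using successful_step(2)[OF True] \<delta>D unfolding s' by linarith
  next
    case False
    then have "norm (u s' - ubar) < \<delta>" using rejected_step[of s'] near us s' by simp
    then have "\<delta>D \<le> Delta s'" using local False by (meson not_less)
    then show ?thesis using rejected_step[of s'] False params s' by simp
  qed
  then show ?thesis using s us by blast
qed

lemma successful_step_decrease:
  assumes r: "rho s > eta1" and Dl: "Dl \<le> Delta s" "Dl > 0" and g: "\<epsilon> \<le> norm (g s)" "\<epsilon> > 0"
  shows "eta1 * (mu / 2) * min (\<epsilon> * min Dmin (\<epsilon> / CH)) ((\<epsilon> * Dl) * min Dl ((\<epsilon> * Dl) / CH))
    \<le> f (u s) - f (u (Suc s))"
proof -
  define K where "K = min (\<epsilon> * min Dmin (\<epsilon> / CH)) ((\<epsilon> * Dl) * min Dl ((\<epsilon> * Dl) / CH))"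
  have H: "0 \<le> mnorm (H s)" "mnorm (H s) \<le> CH" using mnorm_nonneg CH by auto
  have mu: "mu > 0" and Dmin: "Dmin > 0" using params by auto
  have "mu / 2 * K \<le> predicted_reduction s"
  proof (cases "Dmin \<le> Delta s")
    case True
    have "mu / 2 * K \<le> mu / 2 * (\<epsilon> * min Dmin (\<epsilon> / CH))" by (simp add: K_def mu)
    also have "\<dots> \<le> mu / 2 * (norm (g s) * min (Delta s) (norm (g s) / CH))"
      using g True CH(1) Dmin mu by (intro mult_left_mono mult_mono min.mono divide_right_mono) auto
    also have "\<dots> \<le> mu / 2 * (norm (g s) * min_div (Delta s) (norm (g s)) (mnorm (H s)))"
      using min_div_ge[OF H CH(1), of "norm (g s)" "Delta s"] mu by (intro mult_left_mono) auto
    also have "\<dots> \<le> predicted_reduction s"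
      using step_large[OF True] True by (simp add: predicted_reduction_def mult.assoc)
    finally show ?thesis .
  next
    case False
    then have small: "Delta s < Dmin" by simp
    define P where "P = model_psi Gs S Jy Ju (u s) (Delta s)"
    have "\<epsilon> * Dl \<le> norm (g s) * Delta s" using g Dl by (intro mult_mono) auto
    then have P: "\<epsilon> * Dl \<le> P" using successful_step(5)[OF r small] by (simp add: P_def)
    have "0 < \<epsilon> * Dl" using g Dl by simp
    then have P_pos: "0 \<le> P" using P by linarith
    have "mu / 2 * K \<le> mu / 2 * ((\<epsilon> * Dl) * min Dl ((\<epsilon> * Dl) / CH))" by (simp add: K_def mu)
    also have "\<dots> \<le> mu / 2 * (P * min (Delta s) (P / CH))"
      using P P_pos g Dl CH(1) mu by (intro mult_left_mono mult_mono min.mono divide_right_mono) auto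
    also have "\<dots> \<le> mu / 2 * (P * min_div (Delta s) P (mnorm (H s)))"
      using min_div_ge[OF H CH(1) P_pos, of "Delta s"] mu P_pos by (intro mult_left_mono) auto
    also have "\<dots> \<le> predicted_reduction s"
      using step_small[OF small] False by (simp add: predicted_reduction_def P_def mult.assoc)
    finally show ?thesis .
  qed
  then have "eta1 * (mu / 2 * K) \<le> eta1 * predicted_reduction s" using params by simp
  also have "\<dots> \<le> f (u s) - f (u (Suc s))" by (rule successful_step(4)[OF r])
  finally show ?thesis by (simp add: K_def mult.assoc)
qed

lemma gradients_tendsto_zero:
  assumes s: "filterlim s sequentially sequentially"
    and Dl: "Dl > 0" "\<And>j. Dl \<le> Delta (s j)" and success: "\<And>j. rho (s j) > eta1"
    and decrease: "(\<lambda>k. f (u k) - f (u (Suc k))) \<longlonglongrightarrow> 0"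
  shows "(\<lambda>j. g (s j)) \<longlonglongrightarrow> 0"
  unfolding tendsto_iff
proof (intro allI impI)
  fix e :: real assume e: "e > 0"
  define K where "K = eta1 * (mu / 2) * min (e * min Dmin (e / CH)) ((e * Dl) * min Dl ((e * Dl) / CH))"
  have "K > 0" using params e Dl CH by (simp add: K_def)
  moreover have "(\<lambda>j. f (u (s j)) - f (u (Suc (s j)))) \<longlonglongrightarrow> 0"
    using filterlim_compose[OF decrease s] by (simp add: o_def)
  ultimately have "eventually (\<lambda>j. f (u (s j)) - f (u (Suc (s j))) < K) sequentially"
    by (rule order_tendstoD(2)[rotated])
  then show "eventually (\<lambda>j. dist (g (s j)) 0 < e) sequentially"
  proof eventually_elim
    case (elim j)
    show ?case
    proof (rule ccontr)
      assume "\<not> dist (g (s j)) 0 < e"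
      then have "K \<le> f (u (s j)) - f (u (Suc (s j)))"
        unfolding K_def using successful_step_decrease[OF success Dl(2) Dl(1) _ e] by simp
      with elim show False by simp
    qed
  qed
qed

lemma accumulation_point_C_stationary:
  assumes r: "strict_mono r" "(u \<circ> r) \<longlonglongrightarrow> ubar"
  shows "0 \<in> clarke_subdiff f ubar"
proof (rule ccontr)
  assume nonstat: "0 \<notin> clarke_subdiff f ubar"
  obtain \<delta> \<delta>D where \<delta>: "\<delta> > 0" and \<delta>D: "\<delta>D > 0" "\<delta>D < Dmin"
    and local: "\<forall>k. norm (u k - ubar) < \<delta> \<longrightarrow> Delta k < \<delta>D \<longrightarrow> rho k > eta1"
    using small_radius_successful_near[OF nonstat] by blast
  have "eventually (\<lambda>j. norm (u (r j) - ubar) < \<delta>) sequentially"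
    using r(2) \<delta> by (simp add: tendsto_iff dist_norm)
  then obtain N where "\<And>j. j \<ge> N \<Longrightarrow> norm (u (r j) - ubar) < \<delta>"
    by (auto simp: eventually_sequentially)
  then have N: "\<And>j. norm (u (r (j + N)) - ubar) < \<delta>" by simp
  have "\<forall>j. \<exists>s. r (j + Suc N) \<le> s \<and> u s = u (r (j + Suc N)) \<and> beta1 * \<delta>D \<le> Delta s \<and> rho s > eta1"
  proof
    fix j
    have "r (j + Suc N) \<ge> 1" using seq_suble[OF r(1), of "j + Suc N"] by simp
    moreover have "norm (u (r (j + Suc N)) - ubar) < \<delta>" using N[of "Suc j"] by simp
    ultimately show "\<exists>s. r (j + Suc N) \<le> s \<and> u s = u (r (j + Suc N)) \<and> beta1 * \<delta>D \<le> Delta s \<and> rho s > eta1"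
      using successful_step_after[OF local \<delta>D] by blast
  qed
  then obtain s where "\<forall>j. r (j + Suc N) \<le> s j \<and> u (s j) = u (r (j + Suc N))
      \<and> beta1 * \<delta>D \<le> Delta (s j) \<and> rho (s j) > eta1"
    by (auto simp only: choice_iff)
  then have s: "\<And>j. s j \<ge> r (j + Suc N)" "\<And>j. u (s j) = u (r (j + Suc N))"
    "\<And>j. beta1 * \<delta>D \<le> Delta (s j)" "\<And>j. rho (s j) > eta1"
    by auto
  have "j \<le> s j" for j using s(1)[of j] seq_suble[OF r(1), of "j + Suc N"] by simp
  then have s_lim: "filterlim s sequentially sequentially"
    by (intro filterlim_at_top_mono[OF filterlim_ident]) auto
  have decrease: "(\<lambda>k. f (u k) - f (u (Suc k))) \<longlonglongrightarrow> 0"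
    using tendsto_diff[OF f_iterates_tendsto[OF r] LIMSEQ_Suc[OF f_iterates_tendsto[OF r]]] by simp
  have "beta1 * \<delta>D > 0" using params \<delta>D by simp
  then have g_lim: "(\<lambda>j. g (s j)) \<longlonglongrightarrow> 0"
    by (rule gradients_tendsto_zero[OF s_lim _ s(3) s(4) decrease])
  have u_lim: "(\<lambda>j. u (s j)) \<longlonglongrightarrow> ubar"
    using LIMSEQ_ignore_initial_segment[OF r(2), of "Suc N"] by (simp add: s(2) o_def)
  have "g (s j) \<in> clarke_subdiff f (u (s j))" for j by (rule g_sub)
  with nonstat show False using clarke_subdiff_closed_graph[OF u_lim _ g_lim] by blast
qed

end

theorem corollary3p1:
  fixes J :: "(real^'m) \<times> (real^'n) \<Rightarrow> real"
    and Jy :: "(real^'m) \<times> (real^'n) \<Rightarrow> real^'m"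
    and Ju :: "(real^'m) \<times> (real^'n) \<Rightarrow> real^'n"
    and S :: "real^'n \<Rightarrow> real^'m"
    and dS :: "real^'n \<Rightarrow> real^'n \<Rightarrow> real^'m"
    and f :: "real^'n \<Rightarrow> real"
    and Gs :: "real^'n \<Rightarrow> real \<Rightarrow> (real^'n^'m) set"
    and Dmin eta1 eta2 beta1 beta2 mu CH :: real
    and u d g :: "nat \<Rightarrow> real^'n"
    and H :: "nat \<Rightarrow> real^'n^'n"
    and Delta rho :: "nat \<Rightarrow> real"
    and ubar :: "real^'n"
  assumes J_deriv: "\<And>z. (J has_derivative (\<lambda>(dy, du). Jy z \<bullet> dy + Ju z \<bullet> du)) (at z)"
    and Jy_cont: "continuous_on UNIV Jy"
    and Ju_cont: "continuous_on UNIV Ju"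
    and S_loclip: "\<And>x. \<exists>r>0. \<exists>L. L-lipschitz_on (cball x r) S"
    and S_dirdiff: "\<And>x h. ((\<lambda>t. (S (x + t *\<^sub>R h) - S x) /\<^sub>R t) \<longlongrightarrow> dS x h) (at_right 0)"
    and f_def: "f = (\<lambda>x. J (S x, x))"
    and Gs_ne: "\<And>x D. D > 0 \<Longrightarrow> Gs x D \<noteq> {}"
    and Gs_bdd: "\<And>x D. D > 0 \<Longrightarrow> bounded (Gs x D)"
    and G1: "\<And>x D. D > 0 \<Longrightarrow> (\<Union>\<xi>\<in>cball x D. bouligand S \<xi>) \<subseteq> Gs x D"
    and G2: "\<And>xs Ds x. xs \<longlonglongrightarrow> x \<Longrightarrow> Ds \<longlonglongrightarrow> 0 \<Longrightarrow> (\<forall>k. Ds k > 0) \<Longrightarrow>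
               0 \<notin> clarke_subdiff f x \<Longrightarrow>
               (\<lambda>k. SUP G\<in>Gs (xs k) (Ds k). INF W\<in>bouligand S x. mnorm (G - W)) \<longlonglongrightarrow> 0"
    and D_cond: "\<And>x h. \<exists>G\<in>bouligand S x. dS x h = G *v h"
    and params: "Dmin > 0" "0 < eta1" "eta1 < eta2" "eta2 < 1" "0 < beta1" "beta1 < 1"
                "1 < beta2" "0 < mu" "mu \<le> 1" "Delta 0 > Dmin"
    and g_sub: "\<And>k. g k \<in> clarke_subdiff f (u k)"
    and H_sym: "\<And>k. transpose (H k) = H k"
    and no_stop: "\<And>k. g k \<noteq> 0"
    and step_large: "\<And>k. Delta k \<ge> Dmin \<Longrightarrow>
          norm (d k) \<le> Delta k \<and>
          f (u k) - (f (u k) + g k \<bullet> d k + (1/2) * (d k \<bullet> (H k *v d k)))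
            \<ge> mu / 2 * norm (g k) * min_div (Delta k) (norm (g k)) (mnorm (H k)) \<and>
          rho k = (f (u k) - f (u k + d k)) /
                  (f (u k) - (f (u k) + g k \<bullet> d k + (1/2) * (d k \<bullet> (H k *v d k))))"
    and step_small: "\<And>k. Delta k < Dmin \<Longrightarrow>
          norm (d k) \<le> Delta k \<and>
          f (u k) - (f (u k) + model_phi Gs S Jy Ju (u k) (Delta k) (d k) + (1/2) * (d k \<bullet> (H k *v d k)))
            \<ge> mu / 2 * model_psi Gs S Jy Ju (u k) (Delta k)
                * min_div (Delta k) (model_psi Gs S Jy Ju (u k) (Delta k)) (mnorm (H k)) \<and>
          rho k = (if model_psi Gs S Jy Ju (u k) (Delta k) > norm (g k) * Delta k
                   then (f (u k) - f (u k + d k)) /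
                        (f (u k) - (f (u k) + model_phi Gs S Jy Ju (u k) (Delta k) (d k)
                                     + (1/2) * (d k \<bullet> (H k *v d k))))
                   else 0)"
    and u_upd: "\<And>k. u (Suc k) = (if rho k \<le> eta1 then u k else u k + d k)"
    and Delta_upd: "\<And>k. Delta (Suc k) = (if rho k \<le> eta1 then beta1 * Delta k
                        else if rho k \<le> eta2 then max Dmin (Delta k)
                        else max Dmin (beta2 * Delta k))"
    and CH: "CH > 0" "\<And>k. mnorm (H k) \<le> CH"
    and accum: "\<exists>r. strict_mono r \<and> (u \<circ> r) \<longlonglongrightarrow> ubar"
  shows "0 \<in> clarke_subdiff f ubar"
proof -
  interpret trust_region J Jy Ju S dS f Gs Dmin eta1 eta2 beta1 beta2 mu CH u d g H Delta rho
    by unfold_locales (fact assms)+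
  obtain r where "strict_mono r" "(u \<circ> r) \<longlonglongrightarrow> ubar" using accum by blast
  then show ?thesis by (rule accumulation_point_C_stationary)
qed

end
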